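(* Let $X,Y,Z,S$ be discrete random variables taking values in finite sets $\mathcal X,\mathcal Y,\mathcal Z,\mathcal S$, and suppose $X$ is conditionally independent of $Z$ given $(Y,S)$. Then \[\nu_{X,Z|S}\le\frac{|\mathcal Y|}{|\mathcal Z|}\nu_{X,Y|S}.\]
   Context: For discrete random variables $A,B,S$ with finite ranges $\mathcal A,\mathcal B$, define $\nu_{A,B|S}:=\mathbb{E}_S\sum_{a\in\mathcal A}\frac{1}{|\mathcal A|}\sum_{b\in\mathcal B}\frac{1}{|\mathcal B|}\big|\mathbb{P}(A=a,B=b|S)-\mathbb{P}(A=a|S)\mathbb{P}(B=b|S)\big|$, where the outer expectation is over $S$ (values with positive probability). *)

theory Defs
  imports "HOL-Probability.Probability"
begin

text \<open>Discrete random variables are modelled as functions on the sample space of a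
  probability mass function p. Their value ranges are finite types; the range
  cardinality |A| is CARD of the type.\<close>

definition prb :: "'o pmf \<Rightarrow> ('o \<Rightarrow> bool) \<Rightarrow> real" where
  "prb p E = measure_pmf.prob p {\<omega>. E \<omega>}"

definition cprb :: "'o pmf \<Rightarrow> ('o \<Rightarrow> bool) \<Rightarrow> ('o \<Rightarrow> bool) \<Rightarrow> real" where
  "cprb p E C = prb p (\<lambda>\<omega>. E \<omega> \<and> C \<omega>) / prb p C"

definition nu :: "'o pmf \<Rightarrow> ('o \<Rightarrow> 'a::finite) \<Rightarrow> ('o \<Rightarrow> 'b::finite) \<Rightarrow> ('o \<Rightarrow> 's::finite) \<Rightarrow> real" where
  "nu p A B S =
     (\<Sum>s\<in>{s. prb p (\<lambda>\<omega>. S \<omega> = s) > 0}.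
        prb p (\<lambda>\<omega>. S \<omega> = s) *
        (\<Sum>a\<in>UNIV. (1 / real CARD('a)) *
          (\<Sum>b\<in>UNIV. (1 / real CARD('b)) *
             \<bar>cprb p (\<lambda>\<omega>. A \<omega> = a \<and> B \<omega> = b) (\<lambda>\<omega>. S \<omega> = s)
              - cprb p (\<lambda>\<omega>. A \<omega> = a) (\<lambda>\<omega>. S \<omega> = s) *
                cprb p (\<lambda>\<omega>. B \<omega> = b) (\<lambda>\<omega>. S \<omega> = s)\<bar>)))"

definition cond_indep :: "'o pmf \<Rightarrow> ('o \<Rightarrow> 'a) \<Rightarrow> ('o \<Rightarrow> 'c) \<Rightarrow> ('o \<Rightarrow> 'w) \<Rightarrow> bool" where
  "cond_indep p X Z W \<longleftrightarrow>
     (\<forall>w x z. prb p (\<lambda>\<omega>. W \<omega> = w) > 0 \<longrightarrow>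
        cprb p (\<lambda>\<omega>. X \<omega> = x \<and> Z \<omega> = z) (\<lambda>\<omega>. W \<omega> = w) =
        cprb p (\<lambda>\<omega>. X \<omega> = x) (\<lambda>\<omega>. W \<omega> = w) * cprb p (\<lambda>\<omega>. Z \<omega> = z) (\<lambda>\<omega>. W \<omega> = w))"

end

theory Submission
  imports Defs
begin

text \<open>Fix s and x. Conditional independence of X and Z given (Y, S) makes the row
  z \<mapsto> P(X=x, Z=z | s) - P(X=x | s) P(Z=z | s) the image of the row
  y \<mapsto> P(X=x, Y=y | s) - P(X=x | s) P(Y=y | s) under the substochastic kernel
  P(Z=z | Y=y, S=s). Such a kernel does not increase the l1-norm, so summing over z
  is bounded by summing over y; the factor |Y| / |Z| only accounts for the different
  normalisations of the two averages in nu.\<close>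

lemma sum_abs_substochastic_le:
  fixes c :: "'a \<Rightarrow> 'b \<Rightarrow> real"
  assumes "finite A" "finite B"
    and nonneg: "\<And>a b. a \<in> A \<Longrightarrow> b \<in> B \<Longrightarrow> c a b \<ge> 0"
    and row_sum: "\<And>a. a \<in> A \<Longrightarrow> (\<Sum>b\<in>B. c a b) \<le> 1"
  shows "(\<Sum>b\<in>B. \<bar>\<Sum>a\<in>A. c a b * d a\<bar>) \<le> (\<Sum>a\<in>A. \<bar>d a\<bar>)"
proof -
  have "(\<Sum>b\<in>B. \<bar>\<Sum>a\<in>A. c a b * d a\<bar>) \<le> (\<Sum>b\<in>B. \<Sum>a\<in>A. c a b * \<bar>d a\<bar>)"
    by (intro sum_mono order_trans[OF sum_abs]) (simp add: abs_mult nonneg)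
  also have "\<dots> = (\<Sum>a\<in>A. (\<Sum>b\<in>B. c a b) * \<bar>d a\<bar>)"
    by (subst sum.swap) (simp add: sum_distrib_right)
  also have "\<dots> \<le> (\<Sum>a\<in>A. \<bar>d a\<bar>)"
    by (intro sum_mono mult_left_le_one_le) (simp_all add: row_sum sum_nonneg nonneg)
  finally show ?thesis .
qed

lemma prb_nonneg: "prb p E \<ge> 0"
  unfolding prb_def by simp

lemma prb_mono: "(\<And>\<omega>. E \<omega> \<Longrightarrow> F \<omega>) \<Longrightarrow> prb p E \<le> prb p F"
  unfolding prb_def by (rule measure_pmf.finite_measure_mono) auto

lemma prb_eq_sum:
  fixes Y :: "'o \<Rightarrow> 'y::finite"
  shows "prb p E = (\<Sum>y\<in>UNIV. prb p (\<lambda>\<omega>. E \<omega> \<and> Y \<omega> = y))"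
proof -
  have "{\<omega>. E \<omega>} = (\<Union>y. {\<omega>. E \<omega> \<and> Y \<omega> = y})"
    by auto
  then show ?thesis
    unfolding prb_def
    by (simp only:) (rule measure_pmf.finite_measure_finite_Union, auto simp: disjoint_family_on_def)
qed

lemma cprb_nonneg: "cprb p E C \<ge> 0"
  unfolding cprb_def by (simp add: prb_nonneg)

lemma cprb_eq_sum:
  fixes Y :: "'o \<Rightarrow> 'y::finite"
  shows "cprb p E C = (\<Sum>y\<in>UNIV. cprb p (\<lambda>\<omega>. E \<omega> \<and> Y \<omega> = y) C)"
  unfolding cprb_def
  by (subst prb_eq_sum[where Y = Y]) (simp add: sum_divide_distrib conj_ac)

lemma sum_cprb_le_1:
  fixes Z :: "'o \<Rightarrow> 'z::finite"
  shows "(\<Sum>z\<in>UNIV. cprb p (\<lambda>\<omega>. Z \<omega> = z) C) \<le> 1"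
proof -
  have "(\<Sum>z\<in>UNIV. cprb p (\<lambda>\<omega>. Z \<omega> = z) C) = cprb p (\<lambda>_. True) C"
    using cprb_eq_sum[of p "\<lambda>_. True" C Z] by simp
  also have "\<dots> \<le> 1"
    unfolding cprb_def by (simp add: divide_le_eq_1 prb_nonneg)
  finally show ?thesis .
qed

lemma cprb_conj:
  "cprb p (\<lambda>\<omega>. E \<omega> \<and> F \<omega>) C = cprb p E (\<lambda>\<omega>. F \<omega> \<and> C \<omega>) * cprb p F C"
proof (cases "prb p (\<lambda>\<omega>. F \<omega> \<and> C \<omega>) = 0")
  case True
  have "prb p (\<lambda>\<omega>. (E \<omega> \<and> F \<omega>) \<and> C \<omega>) \<le> prb p (\<lambda>\<omega>. F \<omega> \<and> C \<omega>)"
    by (rule prb_mono) auto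
  with True prb_nonneg[of p "\<lambda>\<omega>. (E \<omega> \<and> F \<omega>) \<and> C \<omega>"] show ?thesis
    by (simp add: cprb_def)
next
  case False
  then show ?thesis
    by (simp add: cprb_def conj_ac)
qed

lemma cond_indep_cprb:
  assumes "cond_indep p X Z W"
  shows "cprb p (\<lambda>\<omega>. X \<omega> = x \<and> Z \<omega> = z) (\<lambda>\<omega>. W \<omega> = w)
       = cprb p (\<lambda>\<omega>. X \<omega> = x) (\<lambda>\<omega>. W \<omega> = w) * cprb p (\<lambda>\<omega>. Z \<omega> = z) (\<lambda>\<omega>. W \<omega> = w)"
proof (cases "prb p (\<lambda>\<omega>. W \<omega> = w) > 0")
  case True
  with assms show ?thesis
    unfolding cond_indep_def by blast
next
  case False
  with prb_nonneg[of p "\<lambda>\<omega>. W \<omega> = w"] show ?thesis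
    by (simp add: cprb_def)
qed

lemma cond_indep_deviation_eq_sum:
  fixes Y :: "'o \<Rightarrow> 'y::finite" and S :: "'o \<Rightarrow> 's" and s :: 's
  assumes ci: "cond_indep p X Z (\<lambda>\<omega>. (Y \<omega>, S \<omega>))"
  defines "C \<equiv> \<lambda>\<omega>. S \<omega> = s"
  shows "cprb p (\<lambda>\<omega>. X \<omega> = x \<and> Z \<omega> = z) C
           - cprb p (\<lambda>\<omega>. X \<omega> = x) C * cprb p (\<lambda>\<omega>. Z \<omega> = z) C
       = (\<Sum>y\<in>UNIV. cprb p (\<lambda>\<omega>. Z \<omega> = z) (\<lambda>\<omega>. Y \<omega> = y \<and> C \<omega>)
           * (cprb p (\<lambda>\<omega>. X \<omega> = x \<and> Y \<omega> = y) C
              - cprb p (\<lambda>\<omega>. X \<omega> = x) C * cprb p (\<lambda>\<omega>. Y \<omega> = y) C))"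
proof -
  define k where "k y = cprb p (\<lambda>\<omega>. Z \<omega> = z) (\<lambda>\<omega>. Y \<omega> = y \<and> C \<omega>)" for y
  have indep: "cprb p (\<lambda>\<omega>. X \<omega> = x \<and> Z \<omega> = z) (\<lambda>\<omega>. Y \<omega> = y \<and> C \<omega>)
      = cprb p (\<lambda>\<omega>. X \<omega> = x) (\<lambda>\<omega>. Y \<omega> = y \<and> C \<omega>) * k y" for y
    using cond_indep_cprb[OF ci, of x z "(y, s)"] by (simp add: k_def C_def)
  have "cprb p (\<lambda>\<omega>. (X \<omega> = x \<and> Z \<omega> = z) \<and> Y \<omega> = y) C
      = k y * cprb p (\<lambda>\<omega>. X \<omega> = x \<and> Y \<omega> = y) C" for y
    using cprb_conj[of p "\<lambda>\<omega>. X \<omega> = x \<and> Z \<omega> = z" "\<lambda>\<omega>. Y \<omega> = y" C]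
      cprb_conj[of p "\<lambda>\<omega>. X \<omega> = x" "\<lambda>\<omega>. Y \<omega> = y" C]
    by (simp add: indep)
  then have joint: "cprb p (\<lambda>\<omega>. X \<omega> = x \<and> Z \<omega> = z) C
      = (\<Sum>y\<in>UNIV. k y * cprb p (\<lambda>\<omega>. X \<omega> = x \<and> Y \<omega> = y) C)"
    by (subst cprb_eq_sum[where Y = Y]) simp
  have marginal: "cprb p (\<lambda>\<omega>. Z \<omega> = z) C = (\<Sum>y\<in>UNIV. k y * cprb p (\<lambda>\<omega>. Y \<omega> = y) C)"
    by (subst cprb_eq_sum[where Y = Y]) (simp add: cprb_conj k_def)
  show ?thesis
    unfolding joint marginal k_def[symmetric]
    by (simp add: sum_distrib_left sum_subtractf algebra_simps)
qed

definition cond_dev_l1 ::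
    "'o pmf \<Rightarrow> ('o \<Rightarrow> 'a) \<Rightarrow> ('o \<Rightarrow> 'b::finite) \<Rightarrow> ('o \<Rightarrow> 's) \<Rightarrow> 's \<Rightarrow> 'a \<Rightarrow> real" where
  "cond_dev_l1 p A B S s a =
     (\<Sum>b\<in>UNIV. \<bar>cprb p (\<lambda>\<omega>. A \<omega> = a \<and> B \<omega> = b) (\<lambda>\<omega>. S \<omega> = s)
        - cprb p (\<lambda>\<omega>. A \<omega> = a) (\<lambda>\<omega>. S \<omega> = s) * cprb p (\<lambda>\<omega>. B \<omega> = b) (\<lambda>\<omega>. S \<omega> = s)\<bar>)"

lemma nu_eq_cond_dev_l1:
  fixes A :: "'o \<Rightarrow> 'a::finite" and B :: "'o \<Rightarrow> 'b::finite"
  shows "nu p A B S =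
    (\<Sum>s\<in>{s. prb p (\<lambda>\<omega>. S \<omega> = s) > 0}.
       prb p (\<lambda>\<omega>. S \<omega> = s) * (\<Sum>a\<in>UNIV. cond_dev_l1 p A B S s a))
    / (real CARD('a) * real CARD('b))"
  unfolding nu_def cond_dev_l1_def
  by (simp add: sum_divide_distrib sum_distrib_left)

lemma cond_indep_cond_dev_l1_le:
  fixes Y :: "'o \<Rightarrow> 'y::finite" and Z :: "'o \<Rightarrow> 'z::finite"
  assumes "cond_indep p X Z (\<lambda>\<omega>. (Y \<omega>, S \<omega>))"
  shows "cond_dev_l1 p X Z S s x \<le> cond_dev_l1 p X Y S s x"
  unfolding cond_dev_l1_def cond_indep_deviation_eq_sum[OF assms]
  by (rule sum_abs_substochastic_le) (simp_all add: cprb_nonneg sum_cprb_le_1)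

theorem lemma18:
  fixes p :: "'o pmf"
    and X :: "'o \<Rightarrow> 'x::finite" and Y :: "'o \<Rightarrow> 'y::finite"
    and Z :: "'o \<Rightarrow> 'z::finite" and S :: "'o \<Rightarrow> 's::finite"
  assumes "cond_indep p X Z (\<lambda>\<omega>. (Y \<omega>, S \<omega>))"
  shows "nu p X Z S \<le> real CARD('y) / real CARD('z) * nu p X Y S"
proof -
  let ?Q = "{s. prb p (\<lambda>\<omega>. S \<omega> = s) > 0}"
  let ?D = "\<lambda>W s. prb p (\<lambda>\<omega>. S \<omega> = s) * (\<Sum>x\<in>UNIV. cond_dev_l1 p X W S s x)"
  have "nu p X Z S = (\<Sum>s\<in>?Q. ?D Z s) / (real CARD('x) * real CARD('z))"
    by (rule nu_eq_cond_dev_l1)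
  also have "\<dots> \<le> (\<Sum>s\<in>?Q. ?D Y s) / (real CARD('x) * real CARD('z))"
    by (intro divide_right_mono sum_mono mult_left_mono prb_nonneg
        cond_indep_cond_dev_l1_le[OF assms]) simp
  also have "\<dots> = real CARD('y) / real CARD('z) * nu p X Y S"
    by (simp add: nu_eq_cond_dev_l1[of p X Y])
  finally show ?thesis .
qed

end
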